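(* Let $\mathscr{H}$ be a complex Hilbert space and let $N(\cdot)$ be a norm on $\mathbb{B}(\mathscr{H})$ which is an algebra norm ($N(XY)\leq N(X)N(Y)$ for all $X,Y$) and self-adjoint ($N(X^* )=N(X)$ for all $X$). Then for every $T\in\mathbb{B}(\mathscr{H})$, $$\frac1{16}N(T^*T+TT^* )+\frac12\max\{N(\Re T),N(\Im T)\}\,|N(\Re T+\Im T)-N(\Re T-\Im T)|\leq w_N^2(T).$$
   Context: For $T\in\mathbb{B}(\mathscr{H})$: $\Re(T)=\frac12(T+T^* )$, $\Im(T)=\frac1{2i}(T-T^* )$, and $w_N(T)=\sup_{\theta\in\mathbb{R}}N(\Re(e^{i\theta}T))$. *)

theory Defs
  imports Complex_Main
begin

class complex_vector = real_vector +
  fixes scaleC :: "complex \<Rightarrow> 'a \<Rightarrow> 'a" (infixr "*\<^sub>C" 75)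
  assumes scaleC_add_right: "a *\<^sub>C (x + y) = a *\<^sub>C x + a *\<^sub>C y"
    and scaleC_add_left: "(a + b) *\<^sub>C x = a *\<^sub>C x + b *\<^sub>C x"
    and scaleC_scaleC: "a *\<^sub>C (b *\<^sub>C x) = (a * b) *\<^sub>C x"
    and scaleC_one: "1 *\<^sub>C x = x"
    and scaleR_scaleC: "scaleR r x = complex_of_real r *\<^sub>C x"

text \<open>Complex inner product (linear in the second argument, conjugate-linear in the first)
  inducing the norm.\<close>
class complex_inner = complex_vector + real_normed_vector +
  fixes cinner :: "'a \<Rightarrow> 'a \<Rightarrow> complex"
  assumes cinner_commute: "cinner x y = cnj (cinner y x)"
    and cinner_add_right: "cinner x (y + z) = cinner x y + cinner x z"
    and cinner_scaleC_right: "cinner x (a *\<^sub>C y) = a * cinner x y"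
    and cinner_ge_zero: "0 \<le> Re (cinner x x)"
    and cinner_eq_zero_iff: "cinner x x = 0 \<longleftrightarrow> x = 0"
    and norm_eq_sqrt_cinner: "norm x = sqrt (Re (cinner x x))"

class chilbert_space = complex_inner + complete_space

definition bounded_clinear :: "('a::complex_inner \<Rightarrow> 'a) \<Rightarrow> bool" where
  "bounded_clinear T \<longleftrightarrow>
     (\<forall>x y. T (x + y) = T x + T y) \<and> (\<forall>c x. T (c *\<^sub>C x) = c *\<^sub>C T x) \<and>
     (\<exists>K. \<forall>x. norm (T x) \<le> norm x * K)"

definition cadjoint :: "('a::complex_inner \<Rightarrow> 'a) \<Rightarrow> 'a \<Rightarrow> 'a" where
  "cadjoint T = (SOME S. \<forall>x y. cinner (T x) y = cinner x (S y))"

definition opRe :: "('a::complex_inner \<Rightarrow> 'a) \<Rightarrow> 'a \<Rightarrow> 'a" where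
  "opRe T = (\<lambda>x. (1/2) *\<^sub>C (T x + cadjoint T x))"

definition opIm :: "('a::complex_inner \<Rightarrow> 'a) \<Rightarrow> 'a \<Rightarrow> 'a" where
  "opIm T = (\<lambda>x. (1 / (2 * \<i>)) *\<^sub>C (T x - cadjoint T x))"

text \<open>\<open>N\<close> is a norm on \<open>\<bbbB>(H)\<close> (only its values on bounded operators matter).\<close>
definition is_norm_on_BH :: "(('a::complex_inner \<Rightarrow> 'a) \<Rightarrow> real) \<Rightarrow> bool" where
  "is_norm_on_BH N \<longleftrightarrow>
     (\<forall>X. bounded_clinear X \<longrightarrow> 0 \<le> N X) \<and>
     (\<forall>X. bounded_clinear X \<longrightarrow> (N X = 0 \<longleftrightarrow> X = (\<lambda>_. 0))) \<and>
     (\<forall>X c. bounded_clinear X \<longrightarrow> N (\<lambda>x. c *\<^sub>C X x) = cmod c * N X) \<and>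
     (\<forall>X Y. bounded_clinear X \<longrightarrow> bounded_clinear Y \<longrightarrow> N (\<lambda>x. X x + Y x) \<le> N X + N Y)"

definition algebra_norm :: "(('a::complex_inner \<Rightarrow> 'a) \<Rightarrow> real) \<Rightarrow> bool" where
  "algebra_norm N \<longleftrightarrow>
     (\<forall>X Y. bounded_clinear X \<longrightarrow> bounded_clinear Y \<longrightarrow> N (X \<circ> Y) \<le> N X * N Y)"

definition selfadjoint_norm :: "(('a::complex_inner \<Rightarrow> 'a) \<Rightarrow> real) \<Rightarrow> bool" where
  "selfadjoint_norm N \<longleftrightarrow> (\<forall>X. bounded_clinear X \<longrightarrow> N (cadjoint X) = N X)"

definition wN :: "(('a::complex_inner \<Rightarrow> 'a) \<Rightarrow> real) \<Rightarrow> ('a \<Rightarrow> 'a) \<Rightarrow> real" where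
  "wN N T = (SUP \<theta>::real. N (opRe (\<lambda>x. exp (\<i> * complex_of_real \<theta>) *\<^sub>C T x)))"

end

theory Submission
  imports Defs
begin

text \<open>With \<open>A = Re T\<close> and \<open>B = Im T\<close> one has \<open>Re (e\<^sup>i\<^sup>\<theta> T) = cos \<theta> A - sin \<theta> B\<close>, so \<open>w\<^sub>N(T)\<close>
  dominates \<open>N(A)\<close>, \<open>N(B)\<close> and \<open>N(A \<plusminus> B) / \<surd>2\<close> (take \<open>\<theta> = 0, -\<pi>/2, \<mp>\<pi>/4\<close>).
  Since \<open>T\<^sup>*T + TT\<^sup>* = 2(A\<^sup>2 + B\<^sup>2)\<close>, submultiplicativity bounds the first term by
  \<open>(N(A)\<^sup>2 + N(B)\<^sup>2) / 8 \<le> w\<^sub>N(T)\<^sup>2 / 4\<close>, and \<open>|N(A+B) - N(A-B)| \<le> max (N(A+B)) (N(A-B)) \<le> \<surd>2 w\<^sub>N(T)\<close>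
  bounds the second by \<open>w\<^sub>N(T)\<^sup>2 / \<surd>2 < 3 w\<^sub>N(T)\<^sup>2 / 4\<close>.
  The adjoint is only specified by a choice operator, so its existence is derived first from the
  Riesz representation theorem, proved by minimising the norm on a closed affine hyperplane.\<close>

lemma scaleC_additive: "additive (\<lambda>x::'a::complex_vector. a *\<^sub>C x)"
  by (simp add: additive_def scaleC_add_right)

lemma scaleC_diff_right: "a *\<^sub>C (x - y::'a::complex_vector) = a *\<^sub>C x - a *\<^sub>C y"
  using additive.diff[OF scaleC_additive] .

lemma scaleC_of_real: "complex_of_real r *\<^sub>C (x::'a::complex_vector) = r *\<^sub>R x"
  by (simp add: scaleR_scaleC)

lemma scaleC_eq_Re_Im: "c *\<^sub>C (x::'a::complex_vector) = Re c *\<^sub>R x + Im c *\<^sub>R (\<i> *\<^sub>C x)"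
proof -
  have "c = complex_of_real (Re c) + complex_of_real (Im c) * \<i>"
    by (simp add: complex_eq_iff)
  then have "c *\<^sub>C x = (complex_of_real (Re c) + complex_of_real (Im c) * \<i>) *\<^sub>C x"
    by simp
  also have "\<dots> = Re c *\<^sub>R x + Im c *\<^sub>R (\<i> *\<^sub>C x)"
    by (simp only: scaleC_add_left scaleC_scaleC[symmetric] scaleR_scaleC)
  finally show ?thesis .
qed

lemma scaleC_inverse_2i: "(1 / (2 * \<i>)) *\<^sub>C x = (- 1/2) *\<^sub>R (\<i> *\<^sub>C (x::'a::complex_vector))"
proof -
  have "1 / (2 * \<i>) = complex_of_real (- 1/2) * \<i>"
    by (simp add: complex_eq_iff)
  then show ?thesis
    by (simp only: scaleC_of_real scaleC_scaleC[symmetric])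
qed

lemma cinner_additive: "additive (\<lambda>y. cinner (x::'a::complex_inner) y)"
  by (simp add: additive_def cinner_add_right)

lemma cinner_zero_right [simp]: "cinner (x::'a::complex_inner) 0 = 0"
  using additive.zero[OF cinner_additive] .

lemma cinner_diff_right: "cinner (x::'a::complex_inner) (y - z) = cinner x y - cinner x z"
  using additive.diff[OF cinner_additive] .

lemma cinner_add_left: "cinner (x + y::'a::complex_inner) z = cinner x z + cinner y z"
  by (metis cinner_commute cinner_add_right complex_cnj_add)

lemma cinner_zero_left [simp]: "cinner 0 (x::'a::complex_inner) = 0"
  by (metis cinner_commute cinner_zero_right complex_cnj_zero)

lemma cinner_diff_left: "cinner (x - y::'a::complex_inner) z = cinner x z - cinner y z"
  by (metis cinner_commute cinner_diff_right complex_cnj_diff)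

lemma cinner_scaleC_left: "cinner (a *\<^sub>C x::'a::complex_inner) y = cnj a * cinner x y"
  by (metis cinner_commute cinner_scaleC_right complex_cnj_mult)

lemma cinner_self: "cinner x (x::'a::complex_inner) = complex_of_real ((norm x)\<^sup>2)"
proof -
  have "Im (cinner x x) = 0"
    using cinner_commute[of x x] by (metis cnj.sel(2) neg_equal_zero)
  moreover have "Re (cinner x x) = (norm x)\<^sup>2"
    using norm_eq_sqrt_cinner[of x] cinner_ge_zero[of x] by simp
  ultimately show ?thesis by (simp add: complex_eq_iff)
qed

lemma power2_norm_eq_cinner: "(norm (x::'a::complex_inner))\<^sup>2 = Re (cinner x x)"
  by (simp add: cinner_self)

lemma cinner_right_ext:
  assumes "\<And>x. cinner x a = cinner x (b::'a::complex_inner)"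
  shows "a = b"
  using assms[of "a - b"] cinner_eq_zero_iff[of "a - b"] by (simp add: cinner_diff_right)

lemma norm_scaleC: "norm (a *\<^sub>C x::'a::complex_inner) = cmod a * norm x"
proof -
  have "cinner (a *\<^sub>C x) (a *\<^sub>C x) = (cnj a * a) * cinner x x"
    by (simp add: cinner_scaleC_left cinner_scaleC_right mult.assoc)
  then have "(norm (a *\<^sub>C x))\<^sup>2 = Re ((cnj a * a) * cinner x x)"
    by (simp only: power2_norm_eq_cinner)
  also have "\<dots> = Re (complex_of_real ((cmod a)\<^sup>2) * complex_of_real ((norm x)\<^sup>2))"
    by (simp only: cinner_self complex_norm_square mult.commute)
  also have "\<dots> = (cmod a * norm x)\<^sup>2"
    by (simp add: power_mult_distrib)
  finally show ?thesis
    by (rule power2_eq_imp_eq) simp_all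
qed

lemma power2_norm_add:
  "(norm (x + y::'a::complex_inner))\<^sup>2 = (norm x)\<^sup>2 + (norm y)\<^sup>2 + 2 * Re (cinner x y)"
  using cinner_commute[of y x]
  by (simp add: power2_norm_eq_cinner cinner_add_left cinner_add_right)

lemma power2_norm_diff:
  "(norm (x - y::'a::complex_inner))\<^sup>2 = (norm x)\<^sup>2 + (norm y)\<^sup>2 - 2 * Re (cinner x y)"
  using cinner_commute[of y x]
  by (simp add: power2_norm_eq_cinner cinner_diff_left cinner_diff_right)

lemma parallelogram_law:
  "(norm (x + y::'a::complex_inner))\<^sup>2 + (norm (x - y))\<^sup>2 = 2 * (norm x)\<^sup>2 + 2 * (norm y)\<^sup>2"
  by (simp add: power2_norm_add power2_norm_diff)

lemma power2_norm_diff_projection: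
  fixes u w :: "'a::complex_inner"
  assumes "w \<noteq> 0"
  shows "(norm (u - (cinner w u / complex_of_real ((norm w)\<^sup>2)) *\<^sub>C w))\<^sup>2
           = (norm u)\<^sup>2 - (cmod (cinner w u))\<^sup>2 / (norm w)\<^sup>2"
proof -
  define c where "c = cinner w u"
  define t where "t = c / complex_of_real ((norm w)\<^sup>2)"
  have "(norm (u - t *\<^sub>C w))\<^sup>2 = (norm u)\<^sup>2 + (cmod t * norm w)\<^sup>2 - 2 * Re (t * cinner u w)"
    by (simp add: power2_norm_diff norm_scaleC cinner_scaleC_right)
  also have "cmod t * norm w = cmod c / norm w"
    using assms by (simp add: t_def norm_divide norm_mult power2_eq_square)
  also have "t * cinner u w = complex_of_real ((cmod c)\<^sup>2 / (norm w)\<^sup>2)"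
    using cinner_commute[of u w] by (simp add: t_def c_def complex_norm_square[symmetric])
  finally show ?thesis
    by (simp add: c_def t_def power_divide)
qed

lemma cinner_Cauchy_Schwarz: "cmod (cinner x y) \<le> norm x * norm (y::'a::complex_inner)"
proof (cases "x = 0")
  case False
  have "0 \<le> (norm y)\<^sup>2 - (cmod (cinner x y))\<^sup>2 / (norm x)\<^sup>2"
    using power2_norm_diff_projection[OF False, of y] by (metis zero_le_power2)
  then have "(cmod (cinner x y))\<^sup>2 / (norm x)\<^sup>2 \<le> (norm y)\<^sup>2"
    by simp
  then have "(cmod (cinner x y))\<^sup>2 \<le> (norm x * norm y)\<^sup>2"
    using False by (simp add: divide_le_eq power_mult_distrib mult.commute)
  then show ?thesis
    by (rule power2_le_imp_le) simp
qed simp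

lemma cinner_eq_zero_if_norm_minimal:
  fixes u w :: "'a::complex_inner"
  assumes "\<And>t. norm u \<le> norm (u - t *\<^sub>C w)"
  shows "cinner u w = 0"
proof (cases "w = 0")
  case False
  have "norm u \<le> norm (u - (cinner w u / complex_of_real ((norm w)\<^sup>2)) *\<^sub>C w)"
    by (rule assms)
  then have "(norm u)\<^sup>2 \<le> (norm u)\<^sup>2 - (cmod (cinner w u))\<^sup>2 / (norm w)\<^sup>2"
    using False by (simp add: power2_norm_diff_projection[symmetric] power_mono)
  then have "cinner w u = 0"
    using False by (simp add: field_simps)
  then show ?thesis
    using cinner_commute[of u w] by simp
qed simp

lemma Cauchy_if_dist_le_vanishing:
  fixes X :: "nat \<Rightarrow> 'a::metric_space"
  assumes "\<And>m n. dist (X m) (X n) \<le> e m + e n" and "e \<longlonglongrightarrow> 0"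
  shows "Cauchy X"
proof (rule metric_CauchyI)
  fix r :: real
  assume "0 < r"
  then obtain M where M: "\<forall>n\<ge>M. norm (e n - 0) < r / 2"
    using LIMSEQ_D[OF \<open>e \<longlonglongrightarrow> 0\<close>, of "r / 2"] by auto
  have "\<forall>m\<ge>M. \<forall>n\<ge>M. dist (X m) (X n) < r"
  proof (intro allI impI)
    fix m n
    assume "m \<ge> M" "n \<ge> M"
    then have "e m < r / 2" "e n < r / 2"
      using M abs_ge_self[of "e m"] abs_ge_self[of "e n"] unfolding real_norm_def diff_zero
      by (meson le_less_trans)+
    then show "dist (X m) (X n) < r"
      using assms(1)[of m n] by linarith
  qed
  then show "\<exists>M. \<forall>m\<ge>M. \<forall>n\<ge>M. dist (X m) (X n) < r" ..
qed

lemma power2_norm_diff_le_if_midpoint_large: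
  fixes x y :: "'a::complex_inner"
  assumes "D \<le> (norm ((1/2) *\<^sub>R (x + y)))\<^sup>2"
    and "(norm x)\<^sup>2 \<le> D + s" and "(norm y)\<^sup>2 \<le> D + t"
  shows "(norm (x - y))\<^sup>2 \<le> 2 * s + 2 * t"
proof -
  have "(norm ((1/2) *\<^sub>R (x + y)))\<^sup>2 = (norm (x + y))\<^sup>2 / 4"
    by (simp add: power_divide)
  then show ?thesis
    using assms parallelogram_law[of x y] by linarith
qed

lemma min_norm_point_exists:
  fixes S :: "'a::chilbert_space set"
  assumes "closed S" and "S \<noteq> {}"
    and midpoint: "\<And>x y. x \<in> S \<Longrightarrow> y \<in> S \<Longrightarrow> (1/2) *\<^sub>R (x + y) \<in> S"
  shows "\<exists>u\<in>S. \<forall>x\<in>S. norm u \<le> norm x"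
proof -
  define D where "D = Inf ((\<lambda>x. (norm x)\<^sup>2) ` S)"
  have bdd: "bdd_below ((\<lambda>x. (norm x)\<^sup>2) ` S)"
    by (rule bdd_belowI[of _ 0]) auto
  have D_le: "D \<le> (norm x)\<^sup>2" if "x \<in> S" for x
    unfolding D_def using that bdd by (intro cInf_lower) auto
  have "\<exists>x\<in>S. (norm x)\<^sup>2 < D + inverse (real (Suc n))" for n
    using cInf_lessD[of "(\<lambda>x. (norm x)\<^sup>2) ` S" "D + inverse (real (Suc n))"] \<open>S \<noteq> {}\<close>
    by (auto simp: D_def)
  then obtain xs where xs_S: "\<And>n. xs n \<in> S"
    and xs_small: "\<And>n. (norm (xs n))\<^sup>2 < D + inverse (real (Suc n))"
    by metis
  define e where "e n = sqrt (2 * inverse (real (Suc n)))" for n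
  have "dist (xs m) (xs n) \<le> e m + e n" for m n
  proof -
    have "(norm (xs m - xs n))\<^sup>2 \<le> (e m)\<^sup>2 + (e n)\<^sup>2"
      using power2_norm_diff_le_if_midpoint_large[OF D_le[OF midpoint[OF xs_S xs_S]]
          less_imp_le[OF xs_small[of m]] less_imp_le[OF xs_small[of n]]]
      by (simp add: e_def)
    also have "\<dots> \<le> (e m + e n)\<^sup>2"
      by (simp add: e_def power2_sum)
    finally show ?thesis
      unfolding dist_norm by (rule power2_le_imp_le) (simp add: e_def)
  qed
  moreover have "e \<longlonglongrightarrow> 0"
    unfolding e_def
    using tendsto_real_sqrt[OF tendsto_mult_right_zero[OF LIMSEQ_inverse_real_of_nat, of 2]]
    by simp
  ultimately have "Cauchy xs"
    by (rule Cauchy_if_dist_le_vanishing)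
  then obtain u where u: "xs \<longlonglongrightarrow> u"
    using Cauchy_convergent_iff convergent_def by blast
  have "(norm u)\<^sup>2 \<le> D"
  proof (rule LIMSEQ_le)
    show "(\<lambda>n. (norm (xs n))\<^sup>2) \<longlonglongrightarrow> (norm u)\<^sup>2"
      by (intro tendsto_intros u)
    show "(\<lambda>n. D + inverse (real (Suc n))) \<longlonglongrightarrow> D"
      using tendsto_add[OF tendsto_const LIMSEQ_inverse_real_of_nat, of D] by simp
    show "\<exists>N. \<forall>n\<ge>N. (norm (xs n))\<^sup>2 \<le> D + inverse (real (Suc n))"
      using xs_small less_imp_le by blast
  qed
  moreover have "u \<in> S"
    using closed_sequentially[OF \<open>closed S\<close> xs_S u] .
  ultimately show ?thesis
    using D_le by (meson order_trans norm_ge_zero power2_le_imp_le)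
qed

lemma riesz_representation:
  fixes f :: "'a::chilbert_space \<Rightarrow> complex"
  assumes add: "\<And>x y. f (x + y) = f x + f y"
    and hom: "\<And>c x. f (c *\<^sub>C x) = c * f x"
    and bounded: "\<And>x. cmod (f x) \<le> norm x * K"
  shows "\<exists>y. \<forall>x. f x = cinner y x"
proof (cases "\<forall>x. f x = 0")
  case False
  then obtain x0 where "f x0 \<noteq> 0"
    by blast
  have lin: "bounded_linear f"
  proof (rule bounded_linear_intro[of _ K])
    show "f (r *\<^sub>R x) = r *\<^sub>R f x" for r x
      by (simp add: scaleR_scaleC hom scaleR_conv_of_real)
  qed (use add bounded in auto)
  note linear_f = bounded_linear.linear[OF lin]
  define M where "M = {x. f x = 1}"
  have "closed M"
    unfolding M_def
    by (intro closed_Collect_eq bounded_linear.continuous_on[OF lin] continuous_on_id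
        continuous_on_const)
  moreover have "(1 / f x0) *\<^sub>C x0 \<in> M"
    using \<open>f x0 \<noteq> 0\<close> by (simp add: M_def hom)
  moreover have "(1/2) *\<^sub>R (x + y) \<in> M" if "x \<in> M" "y \<in> M" for x y
    using that by (simp add: M_def scaleR_scaleC hom add)
  ultimately obtain u where "u \<in> M" and u_min: "\<And>x. x \<in> M \<Longrightarrow> norm u \<le> norm x"
    using min_norm_point_exists[of M] by blast
  \<comment> \<open>the vector of least norm in the affine hyperplane \<open>M\<close> is orthogonal to \<open>ker f\<close>\<close>
  have orth: "cinner u v = 0" if "f v = 0" for v
    using \<open>u \<in> M\<close> that
    by (intro cinner_eq_zero_if_norm_minimal u_min) (simp add: M_def linear_diff[OF linear_f] hom)
  have "u \<noteq> 0"
    using \<open>u \<in> M\<close> linear_0[OF linear_f] by (auto simp: M_def)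
  have "f x = cinner ((1 / complex_of_real ((norm u)\<^sup>2)) *\<^sub>C u) x" for x
  proof -
    have "f (x - f x *\<^sub>C u) = 0"
      using \<open>u \<in> M\<close> by (simp add: M_def linear_diff[OF linear_f] hom)
    then have "cinner u (x - f x *\<^sub>C u) = 0"
      by (rule orth)
    then have "cinner u x = f x * complex_of_real ((norm u)\<^sup>2)"
      by (simp add: cinner_diff_right cinner_scaleC_right cinner_self)
    then show ?thesis
      using \<open>u \<noteq> 0\<close> by (simp add: cinner_scaleC_left)
  qed
  then show ?thesis
    by blast
qed (auto intro: exI[of _ 0])

lemma bounded_clinear_iff:
  "bounded_clinear T \<longleftrightarrow> bounded_linear T \<and> (\<forall>c x. T (c *\<^sub>C x) = c *\<^sub>C T x)"
proof
  assume T: "bounded_clinear T"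
  then obtain K where "\<And>x. norm (T x) \<le> norm x * K"
    by (auto simp: bounded_clinear_def)
  with T show "bounded_linear T \<and> (\<forall>c x. T (c *\<^sub>C x) = c *\<^sub>C T x)"
    by (auto simp: bounded_clinear_def scaleR_scaleC intro!: bounded_linear_intro[of _ K])
next
  assume "bounded_linear T \<and> (\<forall>c x. T (c *\<^sub>C x) = c *\<^sub>C T x)"
  then show "bounded_clinear T"
    by (auto simp: bounded_clinear_def linear_add bounded_linear.linear bounded_linear.bounded)
qed

lemma bounded_linear_scaleC: "bounded_linear (\<lambda>x::'a::complex_inner. c *\<^sub>C x)"
  by (rule bounded_linear_intro[of _ "cmod c"])
    (simp_all add: scaleC_add_right scaleR_scaleC scaleC_scaleC mult.commute norm_scaleC)

lemma bounded_clinear_add: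
  "bounded_clinear X \<Longrightarrow> bounded_clinear Y \<Longrightarrow> bounded_clinear (\<lambda>x. X x + Y x)"
  by (simp add: bounded_clinear_iff bounded_linear_add scaleC_add_right)

lemma bounded_clinear_diff:
  "bounded_clinear X \<Longrightarrow> bounded_clinear Y \<Longrightarrow> bounded_clinear (\<lambda>x. X x - Y x)"
  by (simp add: bounded_clinear_iff bounded_linear_sub scaleC_diff_right)

lemma bounded_clinear_compose:
  "bounded_clinear X \<Longrightarrow> bounded_clinear Y \<Longrightarrow> bounded_clinear (\<lambda>x. X (Y x))"
  by (simp add: bounded_clinear_iff bounded_linear_compose)

lemma bounded_clinear_scaleC:
  "bounded_clinear X \<Longrightarrow> bounded_clinear (\<lambda>x. c *\<^sub>C X x)"
  by (simp add: bounded_clinear_iff bounded_linear_compose[OF bounded_linear_scaleC]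
      scaleC_scaleC mult.commute)

lemma bounded_clinear_scaleR:
  "bounded_clinear X \<Longrightarrow> bounded_clinear (\<lambda>x. r *\<^sub>R X x)"
  using bounded_clinear_scaleC[of X "complex_of_real r"] by (simp add: scaleC_of_real)

lemma cadjoint_unique:
  assumes "\<And>x y. cinner (T x) y = cinner x (S y)"
  shows "cadjoint T = S"
proof -
  have "\<forall>x y. cinner (T x) y = cinner x (cadjoint T y)"
    unfolding cadjoint_def by (rule someI[of _ S]) (use assms in blast)
  with assms show ?thesis
    by (intro ext cinner_right_ext) metis
qed

lemma cinner_cadjoint:
  fixes T :: "'a::chilbert_space \<Rightarrow> 'a"
  assumes "bounded_clinear T"
  shows "cinner (T x) y = cinner x (cadjoint T y)"
proof -
  obtain K where K: "\<And>x. norm (T x) \<le> norm x * K" and "K \<ge> 0"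
    using assms by (metis bounded_clinear_iff bounded_linear.nonneg_bounded)
  have "\<exists>z. \<forall>x. cinner y (T x) = cinner z x" for y
  proof (rule riesz_representation[of _ "norm y * K"])
    show "cmod (cinner y (T x)) \<le> norm x * (norm y * K)" for x
      using cinner_Cauchy_Schwarz[of y "T x"] mult_left_mono[OF K[of x] norm_ge_zero[of y]]
      by (simp add: mult_ac)
  qed (use assms in \<open>simp_all add: bounded_clinear_def cinner_add_right cinner_scaleC_right\<close>)
  then have "\<exists>z. \<forall>x. cinner (T x) y = cinner x z" for y
    by (metis cinner_commute)
  then have "\<exists>S. \<forall>x y. cinner (T x) y = cinner x (S y)"
    by metis
  then have "\<forall>x y. cinner (T x) y = cinner x (cadjoint T y)"
    unfolding cadjoint_def by (rule someI_ex)
  then show ?thesis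
    by blast
qed

lemma bounded_clinear_cadjoint:
  fixes T :: "'a::chilbert_space \<Rightarrow> 'a"
  assumes T: "bounded_clinear T"
  shows "bounded_clinear (cadjoint T)"
proof -
  obtain K where K: "\<And>x. norm (T x) \<le> norm x * K" and "K \<ge> 0"
    using T by (metis bounded_clinear_iff bounded_linear.nonneg_bounded)
  note adj = cinner_cadjoint[OF T, symmetric]
  have "norm (cadjoint T y) \<le> norm y * K" for y
  proof -
    have "(norm (cadjoint T y))\<^sup>2 = Re (cinner (T (cadjoint T y)) y)"
      by (simp add: adj power2_norm_eq_cinner)
    also have "\<dots> \<le> norm (T (cadjoint T y)) * norm y"
      using complex_Re_le_cmod cinner_Cauchy_Schwarz by (rule order_trans)
    also have "\<dots> \<le> norm (cadjoint T y) * (norm y * K)"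
      using mult_right_mono[OF K[of "cadjoint T y"] norm_ge_zero[of y]] by (simp add: mult_ac)
    finally show ?thesis
      using \<open>K \<ge> 0\<close> by (cases "cadjoint T y = 0") (simp_all add: power2_eq_square mult.commute)
  qed
  moreover have "cadjoint T (a + b) = cadjoint T a + cadjoint T b" for a b
    by (rule cinner_right_ext) (simp add: adj cinner_add_right)
  moreover have "cadjoint T (c *\<^sub>C a) = c *\<^sub>C cadjoint T a" for c a
    by (rule cinner_right_ext) (simp add: adj cinner_scaleC_right)
  ultimately show ?thesis
    unfolding bounded_clinear_def by blast
qed

lemma cadjoint_scaleC:
  fixes T :: "'a::chilbert_space \<Rightarrow> 'a"
  assumes "bounded_clinear T"
  shows "cadjoint (\<lambda>x. c *\<^sub>C T x) = (\<lambda>x. cnj c *\<^sub>C cadjoint T x)"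
  by (rule cadjoint_unique)
    (simp add: cinner_scaleC_left cinner_scaleC_right cinner_cadjoint[OF assms])

lemma half_scaleC_add_cnj:
  fixes p q :: "'a::complex_vector"
  shows "(1/2) *\<^sub>C (c *\<^sub>C p + cnj c *\<^sub>C q)
           = Re c *\<^sub>R ((1/2) *\<^sub>C (p + q)) - Im c *\<^sub>R ((1 / (2 * \<i>)) *\<^sub>C (p - q))"
proof -
  have half: "(1/2::complex) *\<^sub>C v = (1/2::real) *\<^sub>R v" for v :: 'a
    by (simp add: scaleR_scaleC)
  show ?thesis
    unfolding scaleC_eq_Re_Im[of c p] scaleC_eq_Re_Im[of "cnj c" q] half scaleC_inverse_2i
      scaleC_diff_right
    by (simp add: algebra_simps)
qed

lemma opRe_scaleC:
  fixes T :: "'a::chilbert_space \<Rightarrow> 'a"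
  assumes "bounded_clinear T"
  shows "opRe (\<lambda>x. c *\<^sub>C T x) = (\<lambda>x. Re c *\<^sub>R opRe T x - Im c *\<^sub>R opIm T x)"
  unfolding opRe_def opIm_def cadjoint_scaleC[OF assms] half_scaleC_add_cnj ..

lemma opRe_rotate:
  fixes T :: "'a::chilbert_space \<Rightarrow> 'a"
  assumes "bounded_clinear T"
  shows "opRe (\<lambda>x. exp (\<i> * complex_of_real \<theta>) *\<^sub>C T x)
           = (\<lambda>x. cos \<theta> *\<^sub>R opRe T x - sin \<theta> *\<^sub>R opIm T x)"
proof -
  have "exp (\<i> * complex_of_real \<theta>) = cis \<theta>"
    by (simp add: cis_conv_exp)
  then show ?thesis
    using opRe_scaleC[OF assms, of "cis \<theta>"] by simp
qed

lemma bounded_clinear_opRe: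
  fixes T :: "'a::chilbert_space \<Rightarrow> 'a"
  shows "bounded_clinear T \<Longrightarrow> bounded_clinear (opRe T)"
  unfolding opRe_def
  by (intro bounded_clinear_scaleC bounded_clinear_add bounded_clinear_cadjoint)

lemma bounded_clinear_opIm:
  fixes T :: "'a::chilbert_space \<Rightarrow> 'a"
  shows "bounded_clinear T \<Longrightarrow> bounded_clinear (opIm T)"
  unfolding opIm_def
  by (intro bounded_clinear_scaleC bounded_clinear_diff bounded_clinear_cadjoint)

lemma opRe_square_add_opIm_square:
  fixes T :: "'a::chilbert_space \<Rightarrow> 'a"
  assumes T: "bounded_clinear T"
  shows "opRe T (opRe T x) + opIm T (opIm T x) = (1/2) *\<^sub>R (cadjoint T (T x) + T (cadjoint T x))"
proof -
  define S where "S = cadjoint T"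
  have S: "bounded_clinear S"
    unfolding S_def using T by (rule bounded_clinear_cadjoint)
  have lin: "X (u + v) = X u + X v" "X (u - v) = X u - X v" "X (r *\<^sub>R u) = r *\<^sub>R X u"
    "X (c *\<^sub>C u) = c *\<^sub>C X u" if "bounded_clinear X" for X :: "'a \<Rightarrow> 'a" and u v r c
    using that by (auto simp: bounded_clinear_iff linear_add linear_diff linear_scale
        bounded_linear.linear)
  have A: "opRe T y = (1/2) *\<^sub>R (T y + S y)" for y
    by (simp add: opRe_def S_def scaleR_scaleC)
  have B: "opIm T y = (- 1/2) *\<^sub>R (\<i> *\<^sub>C (T y - S y))" for y
    unfolding opIm_def S_def by (rule scaleC_inverse_2i)
  have ii: "\<i> *\<^sub>C (\<i> *\<^sub>C v) = - v" for v :: 'a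
    by (simp add: scaleC_scaleC scaleC_of_real[of "-1", simplified])
  have i_scaleR: "\<i> *\<^sub>C (r *\<^sub>R v) = r *\<^sub>R (\<i> *\<^sub>C v)" for r and v :: 'a
    by (simp add: scaleR_scaleC scaleC_scaleC mult.commute)
  have double: "r *\<^sub>R v + r *\<^sub>R v = (2 * r) *\<^sub>R v" "r *\<^sub>R v + (r *\<^sub>R v + w) = (2 * r) *\<^sub>R v + w"
    for r and v w :: 'a
    by (simp_all add: scaleR_add_left[symmetric])
  show ?thesis
    unfolding A B S_def[symmetric]
    by (simp add: lin[OF T] lin[OF S] scaleC_add_right scaleC_diff_right i_scaleR ii algebra_simps
        double)
qed

lemma norm_on_BH_nonneg: "is_norm_on_BH N \<Longrightarrow> bounded_clinear X \<Longrightarrow> 0 \<le> N X"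
  unfolding is_norm_on_BH_def by blast

lemma norm_on_BH_triangle:
  "is_norm_on_BH N \<Longrightarrow> bounded_clinear X \<Longrightarrow> bounded_clinear Y \<Longrightarrow> N (\<lambda>x. X x + Y x) \<le> N X + N Y"
  unfolding is_norm_on_BH_def by blast

lemma norm_on_BH_scaleR:
  assumes "is_norm_on_BH N" and "bounded_clinear X"
  shows "N (\<lambda>x. r *\<^sub>R X x) = \<bar>r\<bar> * N X"
  using assms unfolding is_norm_on_BH_def by (simp add: scaleR_scaleC)

lemma norm_on_BH_diff_le:
  assumes N: "is_norm_on_BH N" and "bounded_clinear X" and "bounded_clinear Y"
  shows "N (\<lambda>x. X x - Y x) \<le> N X + N Y"
proof -
  have "N (\<lambda>x. X x + (- 1) *\<^sub>R Y x) \<le> N X + N (\<lambda>x. (- 1) *\<^sub>R Y x)"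
    using assms by (intro norm_on_BH_triangle bounded_clinear_scaleR)
  then show ?thesis
    using norm_on_BH_scaleR[OF N \<open>bounded_clinear Y\<close>, of "- 1"] by simp
qed

lemma norm_rotated_opRe_le_wN:
  fixes T :: "'a::chilbert_space \<Rightarrow> 'a"
  assumes N: "is_norm_on_BH N" and T: "bounded_clinear T"
  shows "N (\<lambda>x. cos \<theta> *\<^sub>R opRe T x - sin \<theta> *\<^sub>R opIm T x) \<le> wN N T"
proof -
  define W where "W \<phi> = N (\<lambda>x. cos \<phi> *\<^sub>R opRe T x - sin \<phi> *\<^sub>R opIm T x)" for \<phi>
  have A: "bounded_clinear (opRe T)" and B: "bounded_clinear (opIm T)"
    using T by (simp_all add: bounded_clinear_opRe bounded_clinear_opIm)
  have "W \<phi> \<le> N (opRe T) + N (opIm T)" for \<phi>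
  proof -
    have "W \<phi> \<le> \<bar>cos \<phi>\<bar> * N (opRe T) + \<bar>sin \<phi>\<bar> * N (opIm T)"
      unfolding W_def
      using norm_on_BH_diff_le[OF N bounded_clinear_scaleR[OF A] bounded_clinear_scaleR[OF B]]
      by (simp add: norm_on_BH_scaleR[OF N A] norm_on_BH_scaleR[OF N B])
    also have "\<dots> \<le> 1 * N (opRe T) + 1 * N (opIm T)"
      by (intro add_mono mult_right_mono abs_cos_le_one abs_sin_le_one
          norm_on_BH_nonneg[OF N A] norm_on_BH_nonneg[OF N B])
    finally show ?thesis
      by simp
  qed
  then have "bdd_above (range W)"
    by (intro bdd_aboveI[of _ "N (opRe T) + N (opIm T)"]) auto
  then show ?thesis
    using cSUP_upper[of \<theta> UNIV W] unfolding wN_def opRe_rotate[OF T] W_def by simp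
qed

lemma norm_opRe_opIm_le_wN:
  fixes T :: "'a::chilbert_space \<Rightarrow> 'a"
  assumes N: "is_norm_on_BH N" and T: "bounded_clinear T"
  shows "N (opRe T) \<le> wN N T" and "N (opIm T) \<le> wN N T"
    and "N (\<lambda>x. opRe T x + opIm T x) \<le> sqrt 2 * wN N T"
    and "N (\<lambda>x. opRe T x - opIm T x) \<le> sqrt 2 * wN N T"
proof -
  have A: "bounded_clinear (opRe T)" and B: "bounded_clinear (opIm T)"
    using T by (simp_all add: bounded_clinear_opRe bounded_clinear_opIm)
  note rotated = norm_rotated_opRe_le_wN[OF N T]
  show "N (opRe T) \<le> wN N T"
    using rotated[of 0] by simp
  show "N (opIm T) \<le> wN N T"
    using rotated[of "- (pi/2)"] by simp
  have diagonal: "N X \<le> sqrt 2 * wN N T" if "sqrt 2 / 2 * N X \<le> wN N T" for X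
  proof -
    have "N X = sqrt 2 * (sqrt 2 / 2 * N X)"
      by simp
    also have "\<dots> \<le> sqrt 2 * wN N T"
      using that by (rule mult_left_mono) simp
    finally show ?thesis .
  qed
  show "N (\<lambda>x. opRe T x + opIm T x) \<le> sqrt 2 * wN N T"
    using rotated[of "- (pi/4)"] norm_on_BH_scaleR[OF N bounded_clinear_add[OF A B], of "sqrt 2 / 2"]
    by (intro diagonal) (simp add: cos_45 sin_45 scaleR_add_right)
  show "N (\<lambda>x. opRe T x - opIm T x) \<le> sqrt 2 * wN N T"
    using rotated[of "pi/4"] norm_on_BH_scaleR[OF N bounded_clinear_diff[OF A B], of "sqrt 2 / 2"]
    by (intro diagonal) (simp add: cos_45 sin_45 scaleR_diff_right)
qed

lemma norm_cadjoint_anticommutator_le: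
  fixes T :: "'a::chilbert_space \<Rightarrow> 'a"
  assumes N: "is_norm_on_BH N" and "algebra_norm N" and T: "bounded_clinear T"
  shows "N (\<lambda>x. cadjoint T (T x) + T (cadjoint T x)) \<le> 2 * ((N (opRe T))\<^sup>2 + (N (opIm T))\<^sup>2)"
proof -
  have A: "bounded_clinear (opRe T)" and B: "bounded_clinear (opIm T)"
    using T by (simp_all add: bounded_clinear_opRe bounded_clinear_opIm)
  have AA: "bounded_clinear (\<lambda>x. opRe T (opRe T x))"
    and BB: "bounded_clinear (\<lambda>x. opIm T (opIm T x))"
    using A B by (simp_all add: bounded_clinear_compose)
  have "(\<lambda>x. cadjoint T (T x) + T (cadjoint T x))
      = (\<lambda>x. 2 *\<^sub>R (opRe T (opRe T x) + opIm T (opIm T x)))"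
    by (simp add: opRe_square_add_opIm_square[OF T])
  then have "N (\<lambda>x. cadjoint T (T x) + T (cadjoint T x))
      = 2 * N (\<lambda>x. opRe T (opRe T x) + opIm T (opIm T x))"
    using norm_on_BH_scaleR[OF N bounded_clinear_add[OF AA BB], of 2] by simp
  also have "\<dots> \<le> 2 * (N (\<lambda>x. opRe T (opRe T x)) + N (\<lambda>x. opIm T (opIm T x)))"
    using norm_on_BH_triangle[OF N AA BB] by simp
  also have "\<dots> \<le> 2 * ((N (opRe T))\<^sup>2 + (N (opIm T))\<^sup>2)"
    using \<open>algebra_norm N\<close> A B unfolding algebra_norm_def o_def power2_eq_square
    by (simp add: add_mono)
  finally show ?thesis .
qed

theorem corollary2p16:
  fixes N :: "('a::chilbert_space \<Rightarrow> 'a) \<Rightarrow> real" and T :: "'a \<Rightarrow> 'a"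
  assumes "is_norm_on_BH N" and "algebra_norm N" and "selfadjoint_norm N"
    and "bounded_clinear T"
  shows "(1/16) * N (\<lambda>x. cadjoint T (T x) + T (cadjoint T x))
           + (1/2) * max (N (opRe T)) (N (opIm T))
               * \<bar>N (\<lambda>x. opRe T x + opIm T x) - N (\<lambda>x. opRe T x - opIm T x)\<bar>
         \<le> (wN N T)^2"
proof -
  define a b p q w where "a = N (opRe T)" and "b = N (opIm T)"
    and "p = N (\<lambda>x. opRe T x + opIm T x)" and "q = N (\<lambda>x. opRe T x - opIm T x)" and "w = wN N T"
  have A: "bounded_clinear (opRe T)" and B: "bounded_clinear (opIm T)"
    using assms(4) by (simp_all add: bounded_clinear_opRe bounded_clinear_opIm)
  have nonneg: "0 \<le> a" "0 \<le> b" "0 \<le> p" "0 \<le> q"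
    unfolding a_def b_def p_def q_def
    by (intro norm_on_BH_nonneg[OF assms(1)] A B bounded_clinear_add bounded_clinear_diff)+
  note le_w = norm_opRe_opIm_le_wN[OF assms(1,4), folded a_def b_def p_def q_def w_def]
  have "(1/16) * N (\<lambda>x. cadjoint T (T x) + T (cadjoint T x)) \<le> (1/8) * (a\<^sup>2 + b\<^sup>2)"
    using norm_cadjoint_anticommutator_le[OF assms(1,2,4)] by (simp add: a_def b_def)
  also have "\<dots> \<le> (1/4) * w\<^sup>2"
    using power_mono[OF le_w(1) nonneg(1), of 2] power_mono[OF le_w(2) nonneg(2), of 2] by simp
  finally have first: "(1/16) * N (\<lambda>x. cadjoint T (T x) + T (cadjoint T x)) \<le> (1/4) * w\<^sup>2" .
  have "\<bar>p - q\<bar> \<le> sqrt 2 * w"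
    using le_w nonneg by linarith
  then have "(1/2) * max a b * \<bar>p - q\<bar> \<le> (1/2) * w * (sqrt 2 * w)"
    using le_w nonneg by (intro mult_mono) auto
  also have "\<dots> = (sqrt 2 / 2) * w\<^sup>2"
    by (simp add: power2_eq_square)
  also have "\<dots> \<le> (3/4) * w\<^sup>2"
    using real_sqrt_le_iff[of 2 "9/4"] by (intro mult_right_mono) (simp_all add: real_sqrt_divide)
  finally show ?thesis
    using first unfolding a_def b_def p_def q_def w_def by linarith
qed

end
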